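(* Let $k\ge 1$ and let $T,\widetilde{T}$ be binary phylogenetic $X$-trees with $|X|=2k$ and $A_k(T)=A_k(\widetilde{T})$. Let $[x,y]$ be a cherry of $T$, and let $P=x,\beta_1,\ldots,\beta_m,y$ be the unique $x$-$y$ path in $\widetilde{T}$. Deleting all vertices of $P$ (and their incident edges) from $\widetilde{T}$ yields trees $T_{A_1},\ldots,T_{A_m}$ (where $T_{A_i}$ was attached to $\beta_i$) with leaf sets $A_1,\ldots,A_m$. Then $|A_i|$ is even for every $i\in\{1,\dots,m\}$.
   Context: A phylogenetic $X$-tree is a tree with no vertices of degree 2 whose leaves are bijectively labelled by (and identified with) $X$; binary means maximum degree 3. A cherry $[x,y]$ is a pair of leaves adjacent to the same vertex. For a binary character $f: X\to\{a,b\}$, $l(f,T)$ is the minimum, over all maps $g:V(T)\to\{a,b\}$ with $g|_X=f$, of the number of edges $\{u,v\}$ with $g(u)\ne g(v)$; $A_k(T)$ is the set of all binary characters $f$ on $X$ with $l(f,T)=k$. *)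

theory Defs
  imports Main "HOL-Library.FuncSet"
begin

text \<open>Graphs: a finite vertex set V and a set E of undirected edges, each a 2-element subset of V.\<close>

definition adj_in :: "'v set set \<Rightarrow> 'v set \<Rightarrow> ('v \<times> 'v) set" where
  "adj_in E W = {(a, b). {a, b} \<in> E \<and> a \<in> W \<and> b \<in> W}"

definition connected_graph :: "'v set \<Rightarrow> 'v set set \<Rightarrow> bool" where
  "connected_graph V E \<longleftrightarrow> (\<forall>u\<in>V. \<forall>v\<in>V. (u, v) \<in> (adj_in E V)\<^sup>*)"

definition is_tree :: "'v set \<Rightarrow> 'v set set \<Rightarrow> bool" where
  "is_tree V E \<longleftrightarrow> finite V \<and> V \<noteq> {} \<and>
     (\<forall>e\<in>E. e \<subseteq> V \<and> card e = 2) \<and> connected_graph V E \<and> card E + 1 = card V"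

definition degree :: "'v set set \<Rightarrow> 'v \<Rightarrow> nat" where
  "degree E v = card {e \<in> E. v \<in> e}"

definition binary_phylo_tree :: "'v set \<Rightarrow> 'v set \<Rightarrow> 'v set set \<Rightarrow> bool" where
  "binary_phylo_tree X V E \<longleftrightarrow> is_tree V E \<and> X \<subseteq> V \<and>
     X = {v \<in> V. degree E v = 1} \<and>
     (\<forall>v\<in>V. degree E v \<noteq> 2 \<and> degree E v \<le> 3)"

definition changes :: "'v set set \<Rightarrow> ('v \<Rightarrow> bool) \<Rightarrow> nat" where
  "changes E g = card {e \<in> E. \<exists>u v. e = {u, v} \<and> g u \<noteq> g v}"

text \<open>Parsimony score l(f,T) of a binary character f (states a,b encoded as bool).\<close>
definition parsimony :: "'v set \<Rightarrow> 'v set set \<Rightarrow> ('v \<Rightarrow> bool) \<Rightarrow> nat" where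
  "parsimony X E f = Min {changes E g | g. \<forall>x\<in>X. g x = f x}"

definition A_set :: "nat \<Rightarrow> 'v set \<Rightarrow> 'v set set \<Rightarrow> ('v \<Rightarrow> bool) set" where
  "A_set k X E = {f \<in> extensional X. parsimony X E f = k}"

definition is_cherry :: "'v set \<Rightarrow> 'v set \<Rightarrow> 'v set set \<Rightarrow> 'v \<Rightarrow> 'v \<Rightarrow> bool" where
  "is_cherry X V E x y \<longleftrightarrow> x \<in> X \<and> y \<in> X \<and> x \<noteq> y \<and>
     (\<exists>w\<in>V. {x, w} \<in> E \<and> {y, w} \<in> E)"

definition is_path :: "'v set set \<Rightarrow> 'v list \<Rightarrow> bool" where
  "is_path E ps \<longleftrightarrow> ps \<noteq> [] \<and> distinct ps \<and>
     (\<forall>i. Suc i < length ps \<longrightarrow> {ps ! i, ps ! Suc i} \<in> E)"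

text \<open>Leaf set of the part of the tree hanging off path vertex b after deleting the
  path vertices: the leaves reachable from b without using any other path vertex.\<close>
definition attached_leaves ::
  "'v set \<Rightarrow> 'v set \<Rightarrow> 'v set set \<Rightarrow> 'v set \<Rightarrow> 'v \<Rightarrow> 'v set" where
  "attached_leaves X V E P b =
     {z \<in> X. z \<notin> P \<and> (b, z) \<in> (adj_in E ((V - P) \<union> {b}))\<^sup>*}"

end

theory Submission
  imports Defs
begin

text \<open>Suppose some subtree hanging off the \<open>x\<close>--\<open>y\<close> path of the second tree \<open>T'\<close> has an odd number of leaves, and
  take the first one along the path. Cutting the path just after its attachment vertex splits
  \<open>T'\<close> into two connected pieces, one containing \<open>x\<close> and the other \<open>y\<close>, each with an even number
  of leaves. In each piece the leaves can be paired up by edge-disjoint walks; colouring one end of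
  every walk \<open>True\<close>, with \<open>x\<close> and \<open>y\<close> among them, gives a character with \<open>k\<close> leaves in each state,
  and its \<open>k\<close> edge-disjoint bichromatic walks force score \<open>k\<close> in \<open>T'\<close>. So the character lies in
  \<open>A\<^sub>k(T') = A\<^sub>k(T)\<close>; but in \<open>T\<close> the cherry \<open>[x,y]\<close> is monochromatic, and colouring its parent
  \<open>True\<close> as well gives an extension with at most \<open>k - 1\<close> changes.\<close>

subsection \<open>Reachability in induced subgraphs\<close>

lemma adj_in_swap: "(a, b) \<in> adj_in E W \<Longrightarrow> (b, a) \<in> adj_in E W"
  by (auto simp: adj_in_def insert_commute)

lemma rtrancl_adj_in_swap:
  assumes "(a, b) \<in> (adj_in E W)\<^sup>*"
  shows "(b, a) \<in> (adj_in E W)\<^sup>*"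
proof -
  have "(adj_in E W)\<inverse> = adj_in E W"
    using adj_in_swap by auto
  with assms show ?thesis
    by (metis converse_iff rtrancl_converse)
qed

lemma adj_in_mono: "A \<subseteq> B \<Longrightarrow> adj_in E A \<subseteq> adj_in E B"
  by (auto simp: adj_in_def)

lemma rtrancl_adj_in_mono:
  "A \<subseteq> B \<Longrightarrow> (a, b) \<in> (adj_in E A)\<^sup>* \<Longrightarrow> (a, b) \<in> (adj_in E B)\<^sup>*"
  using rtrancl_mono[OF adj_in_mono] by blast

lemma rtrancl_adj_in_target: "(a, b) \<in> (adj_in E A)\<^sup>* \<Longrightarrow> b = a \<or> b \<in> A"
  by (induct rule: rtrancl_induct) (auto simp: adj_in_def)

lemma rtrancl_adj_in_within_reachable:
  "(a, b) \<in> (adj_in E A)\<^sup>* \<Longrightarrow> (a, b) \<in> (adj_in E {v. (a, v) \<in> (adj_in E A)\<^sup>*})\<^sup>*"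
proof (induct rule: rtrancl_induct)
  case (step c b)
  then have "(c, b) \<in> adj_in E {v. (a, v) \<in> (adj_in E A)\<^sup>*}"
    by (auto simp: adj_in_def intro: rtrancl_into_rtrancl)
  with step.hyps(3) show ?case
    by (rule rtrancl_into_rtrancl)
qed simp

lemma rtrancl_adj_in_first_step:
  assumes "(a, v) \<in> (adj_in E (B \<union> {a}))\<^sup>*" "v \<noteq> a" "a \<notin> B"
  shows "\<exists>w. {a, w} \<in> E \<and> w \<in> B \<and> (w, v) \<in> (adj_in E B)\<^sup>*"
  using assms(1,2)
proof (induct rule: rtrancl_induct)
  case (step c v)
  show ?case
  proof (cases "c = a")
    case True
    then show ?thesis using step by (auto simp: adj_in_def)
  next
    case False
    then obtain w where w: "{a, w} \<in> E" "w \<in> B" "(w, c) \<in> (adj_in E B)\<^sup>*"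
      using step by blast
    have "(c, v) \<in> adj_in E B"
      using step(2) False step(4) by (auto simp: adj_in_def)
    then show ?thesis using w by (meson rtrancl_into_rtrancl)
  qed
qed simp

lemma connected_graphI_root:
  assumes "\<And>v. v \<in> V \<Longrightarrow> (r, v) \<in> (adj_in E V)\<^sup>*"
  shows "connected_graph V E"
  unfolding connected_graph_def
  by (meson assms rtrancl_adj_in_swap rtrancl_trans)

lemma connected_graph_neighbour:
  assumes "connected_graph V E" "\<forall>e\<in>E. card e = 2" "v \<in> V" "z \<in> V - {v}"
  obtains u where "{v, u} \<in> E" "u \<in> V - {v}"
proof -
  have "(v, z) \<in> (adj_in E V)\<^sup>*" "v \<noteq> z"
    using assms(1,3,4) unfolding connected_graph_def by auto
  then obtain u where "(v, u) \<in> adj_in E V"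
    by (meson converse_rtranclE)
  then have u: "{v, u} \<in> E" "u \<in> V"
    by (auto simp: adj_in_def)
  then have "card {v, u} = 2"
    using assms(2) by blast
  then have "u \<noteq> v"
    by auto
  with u that show ?thesis
    by blast
qed

lemma adj_in_avoiding:
  "B \<subseteq> V \<Longrightarrow> z \<in> e \<Longrightarrow> z \<notin> B \<Longrightarrow> adj_in E B \<subseteq> adj_in (E - {e}) V"
  by (auto simp: adj_in_def)

subsection \<open>Hop distance, non-cut vertices and bridges\<close>

definition hops :: "('v \<times> 'v) set \<Rightarrow> 'v \<Rightarrow> 'v \<Rightarrow> nat" where
  "hops R r v = (LEAST n. (v, r) \<in> R ^^ n)"

lemma hops_relpow: "(v, r) \<in> R\<^sup>* \<Longrightarrow> (v, r) \<in> R ^^ hops R r v"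
  unfolding hops_def by (metis LeastI_ex rtrancl_power)

lemma hops_le: "(v, r) \<in> R ^^ n \<Longrightarrow> hops R r v \<le> n"
  unfolding hops_def by (rule Least_le)

lemma hops_eq_0_iff:
  assumes "(v, r) \<in> R\<^sup>*" shows "hops R r v = 0 \<longleftrightarrow> v = r"
proof
  show "hops R r v = 0 \<Longrightarrow> v = r"
    using hops_relpow[OF assms] by simp
  show "v = r \<Longrightarrow> hops R r v = 0"
    using hops_le[where n = 0] by fastforce
qed

lemma hops_step:
  assumes "(v, r) \<in> R\<^sup>*" "v \<noteq> r"
  obtains u where "(v, u) \<in> R" "(u, r) \<in> R\<^sup>*" "hops R r u = hops R r v - 1"
proof -
  obtain m where m: "hops R r v = Suc m"
    using assms hops_eq_0_iff by (metis not0_implies_Suc)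
  then have "(v, r) \<in> R ^^ Suc m"
    using hops_relpow[OF assms(1)] by simp
  then obtain u where u: "(v, u) \<in> R" "(u, r) \<in> R ^^ m"
    by (meson relpow_Suc_D2)
  have ur: "(u, r) \<in> R\<^sup>*"
    using u(2) relpow_imp_rtrancl by blast
  have "(v, r) \<in> R ^^ Suc (hops R r u)"
    using u(1) hops_relpow[OF ur] by (meson relpow_Suc_I2)
  then have "Suc m \<le> Suc (hops R r u)"
    using hops_le m by metis
  with hops_le[OF u(2)] have "hops R r u = m" by simp
  with that u(1) ur m show ?thesis by simp
qed

text \<open>A vertex farthest from some root is never a cut vertex.\<close>

lemma connected_graph_remove_vertex:
  assumes fin: "finite V" and con: "connected_graph V E" and two: "2 \<le> card V"
  obtains v where "v \<in> V" "connected_graph (V - {v}) E"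
proof -
  let ?R = "adj_in E V"
  obtain r where r: "r \<in> V"
    using two by fastforce
  define d where "d = hops ?R r"
  have reach: "(v, r) \<in> ?R\<^sup>*" if "v \<in> V" for v
    using con r that unfolding connected_graph_def by blast
  have "Max (d ` V) \<in> d ` V"
    using fin r by (intro Max_in) auto
  then obtain v where v: "v \<in> V" "d v = Max (d ` V)"
    by (metis imageE)
  have far: "d w \<le> d v" if "w \<in> V" for w
    using fin that unfolding v(2) by simp
  have "card (V - {r}) \<noteq> 0"
    using two r fin by simp
  then obtain w where "w \<in> V - {r}"
    by (metis card.empty ex_in_conv)
  then have w: "w \<in> V" "w \<noteq> r"
    by auto
  have "0 < d w"
    using hops_eq_0_iff[OF reach[OF w(1)]] w(2) unfolding d_def by simp
  with far[OF w(1)] have "v \<noteq> r"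
    using hops_eq_0_iff[OF reach[OF r]] unfolding d_def by auto
  have "(w, r) \<in> (adj_in E (V - {v}))\<^sup>*" if "w \<in> V" "w \<noteq> v" "d w = m" for w m
    using that
  proof (induction m arbitrary: w)
    case 0
    then show ?case
      using hops_eq_0_iff[OF reach] unfolding d_def by simp
  next
    case (Suc m)
    have "w \<noteq> r"
      using hops_eq_0_iff[OF reach[OF Suc.prems(1)]] Suc.prems(3) unfolding d_def by simp
    then obtain u where u: "(w, u) \<in> ?R" "d u = d w - 1"
      using hops_step[OF reach[OF Suc.prems(1)]] unfolding d_def by blast
    have uV: "u \<in> V"
      using u(1) by (auto simp: adj_in_def)
    have uv: "u \<noteq> v"
      using far[OF Suc.prems(1)] Suc.prems(3) u(2) by auto
    have "(w, u) \<in> adj_in E (V - {v})"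
      using u(1) uV uv Suc.prems(1,2) by (auto simp: adj_in_def)
    moreover have "(u, r) \<in> (adj_in E (V - {v}))\<^sup>*"
      using Suc.IH[OF uV uv] u(2) Suc.prems(3) by simp
    ultimately show ?case by (rule converse_rtrancl_into_rtrancl)
  qed
  then have "connected_graph (V - {v}) E"
    by (intro connected_graphI_root[of _ r]) (auto intro: rtrancl_adj_in_swap)
  with v(1) that show ?thesis by blast
qed

lemma connected_graph_card_le:
  assumes fin: "finite V" "finite E" and con: "connected_graph V E"
  shows "card V \<le> Suc (card E)"
proof (cases "V = {}")
  case False
  let ?R = "adj_in E V"
  obtain r where r: "r \<in> V" using False by blast
  define d where "d = hops ?R r"
  have reach: "(v, r) \<in> ?R\<^sup>*" if "v \<in> V" for v
    using con r that unfolding connected_graph_def by blast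
  have "\<exists>u. (v, u) \<in> ?R \<and> d u < d v" if "v \<in> V - {r}" for v
  proof -
    have v: "v \<in> V" "v \<noteq> r"
      using that by auto
    obtain u where "(v, u) \<in> ?R" "d u = d v - 1"
      using hops_step[OF reach[OF v(1)] v(2)] unfolding d_def by blast
    moreover have "d v \<noteq> 0"
      using hops_eq_0_iff[OF reach[OF v(1)]] v(2) unfolding d_def by blast
    ultimately show ?thesis by auto
  qed
  then obtain parent where parent: "\<And>v. v \<in> V - {r} \<Longrightarrow> (v, parent v) \<in> ?R \<and> d (parent v) < d v"
    by metis
  \<comment> \<open>every non-root vertex owns the edge to its parent\<close>
  have "inj_on (\<lambda>v. {v, parent v}) (V - {r})"
  proof (rule inj_onI)
    fix a b assume a: "a \<in> V - {r}" and b: "b \<in> V - {r}" and eq: "{a, parent a} = {b, parent b}"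
    show "a = b"
    proof (rule ccontr)
      assume "a \<noteq> b"
      with eq have "a = parent b" "b = parent a" by (auto simp: doubleton_eq_iff)
      moreover have "d (parent a) < d a" "d (parent b) < d b"
        using parent a b by blast+
      ultimately show False by (metis less_asym)
    qed
  qed
  moreover have "(\<lambda>v. {v, parent v}) ` (V - {r}) \<subseteq> E"
    using parent unfolding adj_in_def by auto
  ultimately have "card (V - {r}) \<le> card E"
    using fin(2) card_inj_on_le by blast
  then show ?thesis using r fin(1) by simp
qed simp

lemma is_tree_finite_edges: "is_tree V E \<Longrightarrow> finite E"
  unfolding is_tree_def by (meson PowI finite_Pow_iff finite_subset subsetI)

lemma tree_edge_is_bridge:
  assumes t: "is_tree V E" and e: "{a, b} \<in> E"
  shows "(a, b) \<notin> (adj_in (E - {{a, b}}) V)\<^sup>*"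
proof
  assume p: "(a, b) \<in> (adj_in (E - {{a, b}}) V)\<^sup>*"
  let ?E' = "E - {{a, b}}"
  have fE: "finite E" using is_tree_finite_edges[OF t] .
  have "adj_in E V \<subseteq> (adj_in ?E' V)\<^sup>*"
  proof
    fix q assume "q \<in> adj_in E V"
    then obtain c d where cd: "q = (c, d)" "{c, d} \<in> E" "c \<in> V" "d \<in> V"
      by (auto simp: adj_in_def)
    show "q \<in> (adj_in ?E' V)\<^sup>*"
    proof (cases "{c, d} = {a, b}")
      case True
      then have "(c = a \<and> d = b) \<or> (c = b \<and> d = a)" by (auto simp: doubleton_eq_iff)
      then show ?thesis using p rtrancl_adj_in_swap[OF p] cd(1) by auto
    next
      case False
      then show ?thesis using cd by (auto simp: adj_in_def)
    qed
  qed
  then have "connected_graph V ?E'"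
    using t rtrancl_subset_rtrancl unfolding is_tree_def connected_graph_def by blast
  then have "card V \<le> Suc (card ?E')"
    using connected_graph_card_le t fE unfolding is_tree_def by blast
  moreover have "card ?E' = card E - 1" "card E \<ge> 1"
    using e fE by (auto simp: Suc_le_eq card_gt_0_iff)
  ultimately show False using t unfolding is_tree_def by simp
qed

subsection \<open>Walks and edge-disjoint pairings\<close>

fun walk_edges :: "'a list \<Rightarrow> 'a set set" where
  "walk_edges (a # b # w) = insert {a, b} (walk_edges (b # w))"
| "walk_edges _ = {}"

definition walk :: "'v set set \<Rightarrow> 'v set \<Rightarrow> 'v list \<Rightarrow> bool" where
  "walk E V w \<longleftrightarrow> w \<noteq> [] \<and> set w \<subseteq> V \<and> walk_edges w \<subseteq> E"

lemma walk_edges_Cons: "w \<noteq> [] \<Longrightarrow> walk_edges (v # w) = insert {v, hd w} (walk_edges w)"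
  by (cases w) auto

lemma walk_edges_snoc: "w \<noteq> [] \<Longrightarrow> walk_edges (w @ [v]) = insert {last w, v} (walk_edges w)"
  by (induction w rule: walk_edges.induct) auto

lemma walk_edges_rev: "walk_edges (rev w) = walk_edges w"
proof (induction w)
  case (Cons a w)
  then show ?case
    by (cases "w = []") (simp_all add: walk_edges_snoc walk_edges_Cons last_rev insert_commute)
qed simp

lemma walk_edges_subset: "e \<in> walk_edges w \<Longrightarrow> e \<subseteq> set w \<and> e \<noteq> {}"
  by (induction w rule: walk_edges.induct) auto

lemma walk_rev: "walk E V (rev w) \<longleftrightarrow> walk E V w"
  by (simp add: walk_def walk_edges_rev)

lemma walk_edges_change:
  "w \<noteq> [] \<Longrightarrow> g (hd w) \<noteq> g (last w) \<Longrightarrow> \<exists>a b. {a, b} \<in> walk_edges w \<and> g a \<noteq> g b"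
proof (induction w rule: walk_edges.induct)
  case (1 a b w)
  show ?case
  proof (cases "g a = g b")
    case True
    with "1.prems"(2) have "g (hd (b # w)) \<noteq> g (last (b # w))"
      by simp
    then obtain c d where "{c, d} \<in> walk_edges (b # w)" "g c \<noteq> g d"
      using "1.IH" by blast
    then show ?thesis
      by (intro exI[of _ c] exI[of _ d]) simp
  next
    case False
    then show ?thesis
      by (intro exI[of _ a] exI[of _ b]) simp
  qed
qed auto

definition walk_pairing :: "'v set set \<Rightarrow> 'v set \<Rightarrow> 'v set \<Rightarrow> 'v list set \<Rightarrow> bool" where
  "walk_pairing E V S W \<longleftrightarrow> finite W \<and> (\<forall>w\<in>W. walk E V w \<and> hd w \<noteq> last w) \<and>
     (\<Union>w\<in>W. {hd w, last w}) = S \<and>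
     pairwise (\<lambda>v w. {hd v, last v} \<inter> {hd w, last w} = {}) W \<and>
     pairwise (\<lambda>v w. walk_edges v \<inter> walk_edges w = {}) W"

lemma walkD:
  assumes "walk E V w"
  shows "w \<noteq> []" "set w \<subseteq> V" "walk_edges w \<subseteq> E" "hd w \<in> set w" "last w \<in> set w"
  using assms unfolding walk_def by auto

lemma walk_pairingD:
  assumes "walk_pairing E V S W"
  shows "finite W" "\<And>w. w \<in> W \<Longrightarrow> walk E V w" "\<And>w. w \<in> W \<Longrightarrow> hd w \<noteq> last w"
    "S = (\<Union>w\<in>W. {hd w, last w})"
    "\<And>v w. v \<in> W \<Longrightarrow> w \<in> W \<Longrightarrow> v \<noteq> w \<Longrightarrow> {hd v, last v} \<inter> {hd w, last w} = {}"
    "\<And>v w. v \<in> W \<Longrightarrow> w \<in> W \<Longrightarrow> v \<noteq> w \<Longrightarrow> walk_edges v \<inter> walk_edges w = {}"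
  using assms unfolding walk_pairing_def pairwise_def by blast+

lemma walk_pairing_subset:
  assumes "walk_pairing E V S W"
  shows "S \<subseteq> V"
proof
  fix s assume "s \<in> S"
  then obtain w where "w \<in> W" "s \<in> {hd w, last w}"
    using walk_pairingD(4)[OF assms] by blast
  then show "s \<in> V"
    using walkD(2,4,5)[OF walk_pairingD(2)[OF assms]] by blast
qed

lemma walk_pairing_empty: "walk_pairing E V {} {}"
  by (simp add: walk_pairing_def)

lemma walk_pairing_mono: "walk_pairing E V S W \<Longrightarrow> V \<subseteq> V' \<Longrightarrow> walk_pairing E V' S W"
  by (auto simp: walk_pairing_def walk_def)

lemma walk_pairing_card:
  assumes "walk_pairing E V S W"
  shows "card S = 2 * card W"
proof -
  note P = walk_pairingD[OF assms]
  have "card S = (\<Sum>w\<in>W. card {hd w, last w})"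
    unfolding P(4)
  proof (rule card_UN_disjoint)
    show "\<forall>v\<in>W. \<forall>w\<in>W. v \<noteq> w \<longrightarrow> {hd v, last v} \<inter> {hd w, last w} = {}"
      using P(5) by blast
  qed (simp_all add: P(1))
  also have "\<dots> = (\<Sum>w\<in>W. 2)"
    using P(3) by (intro sum.cong) simp_all
  finally show ?thesis by simp
qed

lemma walk_pairing_heads:
  assumes "walk_pairing E V S W"
  shows "inj_on hd W" "hd ` W \<subseteq> S" "S - hd ` W = last ` W"
proof -
  note P = walk_pairingD[OF assms]
  show "inj_on hd W"
  proof (rule inj_onI)
    fix v w assume vw: "v \<in> W" "w \<in> W" "hd v = hd w"
    show "v = w"
    proof (rule ccontr)
      assume "v \<noteq> w"
      with P(5)[OF vw(1,2)] vw(3) show False by auto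
    qed
  qed
  show "hd ` W \<subseteq> S"
    unfolding P(4) by auto
  have last_not_hd: "last w \<notin> hd ` W" if "w \<in> W" for w
  proof
    assume "last w \<in> hd ` W"
    then obtain w' where w': "w' \<in> W" "last w = hd w'" by blast
    show False
    proof (cases "w = w'")
      case True
      with P(3)[OF that] w' show False by simp
    next
      case False
      with P(5)[OF that w'(1)] w'(2) show False by auto
    qed
  qed
  show "S - hd ` W = last ` W"
  proof
    show "S - hd ` W \<subseteq> last ` W"
      unfolding P(4) by auto
    show "last ` W \<subseteq> S - hd ` W"
      unfolding P(4) using last_not_hd by auto
  qed
qed

lemma walk_pairing_replace:
  assumes p: "walk_pairing E V S W" and w: "w \<in> W"
    and w': "walk E V w'" "hd w' \<noteq> last w'"
    and disj: "\<And>x. x \<in> W - {w} \<Longrightarrow>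
      {hd w', last w'} \<inter> {hd x, last x} = {} \<and> walk_edges w' \<inter> walk_edges x = {}"
  shows "walk_pairing E V (S - {hd w, last w} \<union> {hd w', last w'}) (insert w' (W - {w}))"
proof -
  note P = walk_pairingD[OF p]
  have "(\<Union>x\<in>W - {w}. {hd x, last x}) = S - {hd w, last w}"
  proof
    show "(\<Union>x\<in>W - {w}. {hd x, last x}) \<subseteq> S - {hd w, last w}"
      using P(5)[OF _ w] unfolding P(4) by blast
    show "S - {hd w, last w} \<subseteq> (\<Union>x\<in>W - {w}. {hd x, last x})"
      unfolding P(4) by blast
  qed
  moreover have "{hd a, last a} \<inter> {hd b, last b} = {} \<and> walk_edges a \<inter> walk_edges b = {}"
    if ab: "a \<in> insert w' (W - {w})" "b \<in> insert w' (W - {w})" "a \<noteq> b" for a b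
  proof (cases "a = w'")
    case True
    with ab disj[of b] show ?thesis by blast
  next
    case a: False
    show ?thesis
    proof (cases "b = w'")
      case True
      with ab a disj[of a] show ?thesis by blast
    next
      case False
      with ab a P(5,6)[of a b] show ?thesis by blast
    qed
  qed
  then have "pairwise (\<lambda>v w. {hd v, last v} \<inter> {hd w, last w} = {}) (insert w' (W - {w}))"
    "pairwise (\<lambda>v w. walk_edges v \<inter> walk_edges w = {}) (insert w' (W - {w}))"
    unfolding pairwise_def by blast+
  ultimately show ?thesis
    using P(1,2,3) w' unfolding walk_pairing_def by auto
qed

lemma walk_pairing_reverse:
  assumes p: "walk_pairing E V S W" and w: "w \<in> W"
  shows "walk_pairing E V S (insert (rev w) (W - {w}))"
proof -
  note P = walk_pairingD[OF p]
  have rw: "hd (rev w) = last w" "last (rev w) = hd w"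
    using walkD(1)[OF P(2)[OF w]] by (simp_all add: hd_rev last_rev)
  have "walk_pairing E V (S - {hd w, last w} \<union> {last w, hd w}) (insert (rev w) (W - {w}))"
  proof (rule walk_pairing_replace[OF p w, of "rev w", unfolded rw])
    show "walk E V (rev w)"
      using P(2)[OF w] by (simp add: walk_rev)
    show "last w \<noteq> hd w"
      using P(3)[OF w] by simp
    fix x assume "x \<in> W - {w}"
    then show "{last w, hd w} \<inter> {hd x, last x} = {} \<and> walk_edges (rev w) \<inter> walk_edges x = {}"
      using P(5,6)[of w x] w by (auto simp: walk_edges_rev insert_commute)
  qed
  moreover have "S - {hd w, last w} \<union> {last w, hd w} = S"
    using P(4) w by auto
  ultimately show ?thesis by simp
qed

lemma walk_pairing_orient:
  assumes p: "walk_pairing E V S W" and s: "s \<in> S"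
  obtains W' where "walk_pairing E V S W'" "s \<in> hd ` W'"
proof -
  note P = walk_pairingD[OF p]
  obtain w where w: "w \<in> W" "s = hd w \<or> s = last w"
    using P(4) s by blast
  show ?thesis
  proof (cases "s = hd w")
    case True
    with p w that show ?thesis by blast
  next
    case False
    then have "s = hd (rev w)"
      using w walkD(1)[OF P(2)[OF w(1)]] by (simp add: hd_rev)
    with walk_pairing_reverse[OF p w(1)] that show ?thesis by blast
  qed
qed

lemma walk_pairing_insert_edge:
  assumes p: "walk_pairing E V S W" and v: "v \<notin> V" and u: "u \<in> V" "u \<notin> S"
    and e: "{v, u} \<in> E"
  shows "walk_pairing E (insert v V) (insert v (insert u S)) (insert [v, u] W)"
proof -
  note P = walk_pairingD[OF p]
  have xV: "set x \<subseteq> V" if "x \<in> W" for x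
    using walkD(2)[OF P(2)[OF that]] .
  have "{v, u} \<inter> {hd x, last x} = {}" if "x \<in> W" for x
    using that P(4) walk_pairing_subset[OF p] v u by blast
  moreover have "{v, u} \<notin> walk_edges x" "x \<noteq> [v, u]" if "x \<in> W" for x
    using xV[OF that] walk_edges_subset[of "{v, u}" x] v by auto
  moreover have "walk E (insert v V) [v, u]"
    using u e by (simp add: walk_def)
  ultimately show ?thesis
    using walk_pairing_mono[OF p, of "insert v V"] v u unfolding walk_pairing_def
    by (auto simp: pairwise_insert)
qed

lemma walk_pairing_extend:
  assumes p: "walk_pairing E V S W" and v: "v \<notin> V" and u: "u \<in> S" and e: "{v, u} \<in> E"
  obtains W' where "walk_pairing E (insert v V) (insert v (S - {u})) W'"
proof -
  obtain W0 where p0: "walk_pairing E V S W0" and "u \<in> hd ` W0"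
    using walk_pairing_orient[OF p u] .
  then obtain w where w: "w \<in> W0" "hd w = u"
    by blast
  note P = walk_pairingD[OF p0]
  note wD = walkD[OF P(2)[OF w(1)]]
  have w': "hd (v # w) = v" "last (v # w) = last w" "walk E (insert v V) (v # w)"
    using wD w(2) e by (auto simp: walk_def walk_edges_Cons)
  have "v \<noteq> last w"
    using wD(2,5) v by blast
  moreover have "{v, last w} \<inter> {hd x, last x} = {} \<and> walk_edges (v # w) \<inter> walk_edges x = {}"
    if x: "x \<in> W0 - {w}" for x
  proof -
    note xD = walkD[OF P(2)[OF DiffD1[OF x]]]
    have "{hd w, last w} \<inter> {hd x, last x} = {}" "walk_edges w \<inter> walk_edges x = {}"
      using P(5,6)[of w x] w(1) x by auto
    moreover have "{v, u} \<notin> walk_edges x" "v \<notin> {hd x, last x}"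
      using xD(2,4,5) v walk_edges_subset[of "{v, u}" x] by auto
    ultimately show ?thesis
      using wD(1) w(2) by (auto simp: walk_edges_Cons)
  qed
  ultimately have "walk_pairing E (insert v V) (S - {hd w, last w} \<union> {v, last w}) (insert (v # w) (W0 - {w}))"
    using w' walk_pairing_replace[OF walk_pairing_mono[OF p0, of "insert v V"] w(1) w'(3)] by auto
  moreover have "S - {hd w, last w} \<union> {v, last w} = insert v (S - {u})"
    using P(3)[OF w(1)] P(4) w by auto
  ultimately show ?thesis
    using that by metis
qed

lemma walk_pairing_insert_vertex:
  assumes IH: "\<And>S'. S' \<subseteq> V \<Longrightarrow> even (card S') \<Longrightarrow> \<exists>W. walk_pairing E V S' W"
    and v: "v \<notin> V" and vu: "{v, u} \<in> E" "u \<in> V"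
    and S: "S \<subseteq> insert v V" "even (card S)" "finite S"
  shows "\<exists>W. walk_pairing E (insert v V) S W"
proof (cases "v \<in> S")
  case False
  then obtain W where "walk_pairing E V S W"
    using IH S by blast
  then show ?thesis
    using walk_pairing_mono by blast
next
  case vS: True
  show ?thesis
  proof (cases "u \<in> S")
    case True
    let ?S' = "S - {v, u}"
    have S_eq: "insert v (insert u ?S') = S"
      using vS True by blast
    have "v \<noteq> u"
      using v vu(2) by blast
    then have "card ?S' = card S - 2"
      using S(3) vS True by (auto simp: card_Diff_subset)
    then have "even (card ?S')"
      using S(2) by presburger
    moreover have "?S' \<subseteq> V"
      using S(1) by blast
    ultimately obtain W where "walk_pairing E V ?S' W"
      using IH by blast
    then have "walk_pairing E (insert v V) (insert v (insert u ?S')) (insert [v, u] W)"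
      by (rule walk_pairing_insert_edge) (use v vu in auto)
    then show ?thesis
      unfolding S_eq by blast
  next
    case False
    let ?S' = "insert u (S - {v})"
    have S_eq: "insert v (?S' - {u}) = S"
      using vS False by blast
    have "card ?S' = Suc (card (S - {v}))"
      using S(3) False by simp
    also have "\<dots> = card S"
      using S(3) vS by (rule card_Suc_Diff1)
    moreover have "?S' \<subseteq> V"
      using S(1) vu(2) by blast
    ultimately obtain W where "walk_pairing E V ?S' W"
      using IH S(2) by metis
    then obtain W' where "walk_pairing E (insert v V) (insert v (?S' - {u})) W'"
      by (rule walk_pairing_extend) (use v vu in auto)
    then show ?thesis
      unfolding S_eq by blast
  qed
qed

text \<open>The edge-disjoint form of the T-join theorem, by induction on the number of vertices:
  delete a non-cut vertex \<open>v\<close> and pair \<open>v\<close> with a neighbour \<open>u\<close>, or hand its role over to \<open>u\<close>.\<close>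

lemma walk_pairing_exists:
  assumes "finite V" "connected_graph V E" "\<forall>e\<in>E. card e = 2" "S \<subseteq> V" "even (card S)"
  shows "\<exists>W. walk_pairing E V S W"
  using assms
proof (induction "card V" arbitrary: V S rule: less_induct)
  case less
  have finS: "finite S"
    using less.prems(1,4) finite_subset by blast
  show ?case
  proof (cases "card V \<le> 1")
    case True
    then have "card S = 0"
      using card_mono[OF less.prems(1,4)] less.prems(5) by presburger
    then show ?thesis
      using finS walk_pairing_empty by fastforce
  next
    case False
    then obtain v where v: "v \<in> V" "connected_graph (V - {v}) E"
      using connected_graph_remove_vertex[OF less.prems(1,2)] by auto
    have "card (V - {v}) \<noteq> 0"
      using False v(1) less.prems(1) by simp
    then obtain z where "z \<in> V - {v}"
      by (metis card.empty ex_in_conv)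
    then obtain u where u: "{v, u} \<in> E" "u \<in> V - {v}"
      using connected_graph_neighbour[OF less.prems(2,3) v(1)] by blast
    have "\<exists>W. walk_pairing E (insert v (V - {v})) S W"
    proof (rule walk_pairing_insert_vertex[OF _ _ u])
      show "\<exists>W. walk_pairing E (V - {v}) S' W" if "S' \<subseteq> V - {v}" "even (card S')" for S'
        using less.hyps[OF card_Diff1_less[OF less.prems(1) v(1)] _ v(2) less.prems(3) that]
          less.prems(1) by blast
    qed (use less.prems(4,5) finS in auto)
    then show ?thesis
      using v(1) by (simp add: insert_absorb)
  qed
qed

lemma pairwise_Un:
  "pairwise R A \<Longrightarrow> pairwise R B \<Longrightarrow> (\<And>a b. a \<in> A \<Longrightarrow> b \<in> B \<Longrightarrow> R a b \<and> R b a)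
    \<Longrightarrow> pairwise R (A \<union> B)"
  by (auto simp: pairwise_def)

lemma walk_pairing_Un:
  assumes p: "walk_pairing E V S W" and p': "walk_pairing E V' S' W'" and disj: "V \<inter> V' = {}"
  shows "walk_pairing E (V \<union> V') (S \<union> S') (W \<union> W')"
proof -
  note P = walk_pairingD[OF p] and P' = walk_pairingD[OF p']
  have apart: "{hd w, last w} \<inter> {hd w', last w'} = {}" "walk_edges w \<inter> walk_edges w' = {}"
    if "w \<in> W" "w' \<in> W'" for w w'
  proof -
    note wD = walkD[OF P(2)[OF that(1)]] and wD' = walkD[OF P'(2)[OF that(2)]]
    have "set w \<inter> set w' = {}"
      using wD(2) wD'(2) disj by blast
    then show "{hd w, last w} \<inter> {hd w', last w'} = {}"
      using wD(4,5) wD'(4,5) by (auto simp: disjoint_iff)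
    show "walk_edges w \<inter> walk_edges w' = {}"
    proof (rule ccontr)
      assume "walk_edges w \<inter> walk_edges w' \<noteq> {}"
      then obtain e where "e \<in> walk_edges w" "e \<in> walk_edges w'"
        by blast
      with walk_edges_subset \<open>set w \<inter> set w' = {}\<close> show False
        by blast
    qed
  qed
  have "pairwise (\<lambda>v w. {hd v, last v} \<inter> {hd w, last w} = {}) (W \<union> W')"
  proof (rule pairwise_Un)
    show "pairwise (\<lambda>v w. {hd v, last v} \<inter> {hd w, last w} = {}) W"
      "pairwise (\<lambda>v w. {hd v, last v} \<inter> {hd w, last w} = {}) W'"
      using p p' unfolding walk_pairing_def by blast+
  qed (use apart in blast)
  moreover have "pairwise (\<lambda>v w. walk_edges v \<inter> walk_edges w = {}) (W \<union> W')"
  proof (rule pairwise_Un)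
    show "pairwise (\<lambda>v w. walk_edges v \<inter> walk_edges w = {}) W"
      "pairwise (\<lambda>v w. walk_edges v \<inter> walk_edges w = {}) W'"
      using p p' unfolding walk_pairing_def by blast+
  qed (use apart in blast)
  moreover note Q = walk_pairingD[OF walk_pairing_mono[OF p, of "V \<union> V'"]]
    and Q' = walk_pairingD[OF walk_pairing_mono[OF p', of "V \<union> V'"]]
  ultimately show ?thesis
    unfolding walk_pairing_def using Q(1-4) Q'(1-4) by auto
qed

subsection \<open>Binary phylogenetic trees\<close>

lemma binary_phylo_treeD:
  assumes "binary_phylo_tree X V E"
  shows "is_tree V E" "finite V" "finite E" "\<And>e. e \<in> E \<Longrightarrow> e \<subseteq> V \<and> card e = 2"
    "X \<subseteq> V" "finite X" "\<And>z. z \<in> X \<longleftrightarrow> z \<in> V \<and> degree E z = 1"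
    "\<And>v. v \<in> V \<Longrightarrow> degree E v \<le> 3" "connected_graph V E"
proof -
  have t: "is_tree V E" and XV: "X \<subseteq> V" and X: "X = {v \<in> V. degree E v = 1}"
    and deg: "\<forall>v\<in>V. degree E v \<noteq> 2 \<and> degree E v \<le> 3"
    using assms unfolding binary_phylo_tree_def by simp_all
  show "is_tree V E" "X \<subseteq> V" "finite E"
    using t XV is_tree_finite_edges by blast+
  show finV: "finite V" and "\<And>e. e \<in> E \<Longrightarrow> e \<subseteq> V \<and> card e = 2" and "connected_graph V E"
    using t unfolding is_tree_def by simp_all
  show "finite X"
    using finite_subset[OF XV finV] .
  show "\<And>z. z \<in> X \<longleftrightarrow> z \<in> V \<and> degree E z = 1"
    using X by simp
  show "\<And>v. v \<in> V \<Longrightarrow> degree E v \<le> 3"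
    using deg by simp
qed

lemma two_le_degree:
  assumes "finite E" "e1 \<in> E" "e2 \<in> E" "e1 \<noteq> e2" "v \<in> e1" "v \<in> e2"
  shows "2 \<le> degree E v"
proof -
  have "card {e1, e2} \<le> card {e \<in> E. v \<in> e}"
    using assms by (intro card_mono) auto
  then show ?thesis
    unfolding degree_def using assms(4) by simp
qed

lemma degree_mono: "finite E \<Longrightarrow> E' \<subseteq> E \<Longrightarrow> degree E' v \<le> degree E v"
  unfolding degree_def by (rule card_mono) auto

lemma leaf_edge_unique:
  assumes "binary_phylo_tree X V E" "x \<in> X" "{x, w} \<in> E" "e \<in> E" "x \<in> e"
  shows "e = {x, w}"
proof -
  have "card {e \<in> E. x \<in> e} = 1"
    using binary_phylo_treeD(7)[OF assms(1), of x] assms(2) unfolding degree_def by simp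
  then obtain a where a: "{e \<in> E. x \<in> e} = {a}"
    by (rule card_1_singletonE)
  have "{x, w} \<in> {e \<in> E. x \<in> e}" "e \<in> {e \<in> E. x \<in> e}"
    using assms(3-5) by auto
  then show ?thesis
    unfolding a by simp
qed

subsection \<open>Bounds on the parsimony score\<close>

lemma changes_le_card: "finite E \<Longrightarrow> changes E g \<le> card E"
  unfolding changes_def by (rule card_mono) auto

lemma finite_parsimony_candidates: "finite E \<Longrightarrow> finite {changes E g | g. \<forall>x\<in>X. g x = f x}"
proof -
  assume "finite E"
  then have "{changes E g | g. \<forall>x\<in>X. g x = f x} \<subseteq> {..card E}"
    using changes_le_card by auto
  then show ?thesis
    using finite_subset by blast
qed

lemma parsimony_le_changes:
  assumes "finite E" "\<forall>x\<in>X. g x = f x"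
  shows "parsimony X E f \<le> changes E g"
proof -
  have "changes E g \<in> {changes E g | g. \<forall>x\<in>X. g x = f x}"
    using assms(2) by blast
  then show ?thesis
    unfolding parsimony_def by (rule Min_le[OF finite_parsimony_candidates[OF assms(1)]])
qed

lemma le_parsimonyI:
  assumes "finite E" "\<And>g. \<forall>x\<in>X. g x = f x \<Longrightarrow> m \<le> changes E g"
  shows "m \<le> parsimony X E f"
proof -
  let ?A = "{changes E g | g. \<forall>x\<in>X. g x = f x}"
  have "changes E f \<in> ?A"
    by (rule CollectI, rule exI[of _ f]) simp
  moreover have "\<forall>a\<in>?A. m \<le> a"
  proof
    fix a assume "a \<in> ?A"
    then obtain g where "a = changes E g" "\<forall>x\<in>X. g x = f x"
      by blast
    then show "m \<le> a"
      using assms(2) by simp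
  qed
  ultimately show ?thesis
    unfolding parsimony_def
    by (subst Min_ge_iff[OF finite_parsimony_candidates[OF assms(1)]]) auto
qed

lemma changes_le_sum_degree:
  assumes "finite E" "finite D"
    and meets: "\<And>u v. {u, v} \<in> E \<Longrightarrow> g u \<noteq> g v \<Longrightarrow> u \<in> D \<or> v \<in> D"
  shows "changes E g \<le> (\<Sum>d\<in>D. degree E d)"
proof -
  have "{e \<in> E. \<exists>u v. e = {u, v} \<and> g u \<noteq> g v} \<subseteq> (\<Union>d\<in>D. {e \<in> E. d \<in> e})"
  proof
    fix e assume "e \<in> {e \<in> E. \<exists>u v. e = {u, v} \<and> g u \<noteq> g v}"
    then obtain u v where "e \<in> E" "e = {u, v}" "g u \<noteq> g v"
      by blast
    then show "e \<in> (\<Union>d\<in>D. {e \<in> E. d \<in> e})"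
      using meets[of u v] by auto
  qed
  then have "changes E g \<le> card (\<Union>d\<in>D. {e \<in> E. d \<in> e})"
    unfolding changes_def using assms(1,2) by (intro card_mono) auto
  also have "\<dots> \<le> (\<Sum>d\<in>D. degree E d)"
    unfolding degree_def using assms(2) by (rule card_UN_le)
  finally show ?thesis .
qed

lemma sum_degree_leaves:
  assumes "binary_phylo_tree X V E" "D \<subseteq> X"
  shows "(\<Sum>d\<in>D. degree E d) = card D"
proof -
  have "degree E d = 1" if "d \<in> D" for d
    using binary_phylo_treeD(7)[OF assms(1), of d] assms(2) that by auto
  then have "(\<Sum>d\<in>D. degree E d) = (\<Sum>d\<in>D. 1)"
    by (rule sum.cong[OF refl])
  then show ?thesis by simp
qed

lemma parsimony_le_card_false_leaves:
  assumes bp: "binary_phylo_tree X V E"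
  shows "parsimony X E f \<le> card {z \<in> X. \<not> f z}"
proof -
  let ?D = "{z \<in> X. \<not> f z}"
  have "parsimony X E f \<le> changes E (\<lambda>v. v \<notin> ?D)"
    using binary_phylo_treeD(3)[OF bp] by (intro parsimony_le_changes) auto
  also have "\<dots> \<le> (\<Sum>d\<in>?D. degree E d)"
    using binary_phylo_treeD(3,6)[OF bp] by (intro changes_le_sum_degree) auto
  also have "\<dots> = card ?D"
    using sum_degree_leaves[OF bp, of ?D] by auto
  finally show ?thesis .
qed

lemma cherry_parent:
  assumes bp: "binary_phylo_tree X V E" and ch: "is_cherry X V E x y"
  obtains w where "w \<in> V" "{x, w} \<in> E" "{y, w} \<in> E" "w \<notin> X" "{x, w} \<noteq> {y, w}"
    "x \<in> X" "y \<in> X" "x \<noteq> y"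
proof -
  note B = binary_phylo_treeD[OF bp]
  obtain w where w: "w \<in> V" "{x, w} \<in> E" "{y, w} \<in> E" and xy: "x \<in> X" "y \<in> X" "x \<noteq> y"
    using ch unfolding is_cherry_def by blast
  have "x \<noteq> w" "y \<noteq> w"
    using B(4)[OF w(2)] B(4)[OF w(3)] by auto
  then have e12: "{x, w} \<noteq> {y, w}"
    using xy(3) by (auto simp: doubleton_eq_iff)
  then have "2 \<le> degree E w"
    using two_le_degree[OF B(3) w(2,3)] by simp
  then have "w \<notin> X"
    using B(7) by force
  with w e12 xy that show ?thesis
    by blast
qed

text \<open>Colouring the parent of a monochromatic cherry with the colour of the cherry saves one
  change compared with the trivial bound.\<close>

lemma parsimony_cherry_less:
  assumes bp: "binary_phylo_tree X V E" and ch: "is_cherry X V E x y" and fx: "f x" and fy: "f y"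
  shows "parsimony X E f < card {z \<in> X. f z}"
proof -
  note B = binary_phylo_treeD[OF bp]
  obtain w where w: "w \<in> V" "{x, w} \<in> E" "{y, w} \<in> E" and wX: "w \<notin> X"
    and e12: "{x, w} \<noteq> {y, w}" and xy: "x \<in> X" "y \<in> X" "x \<noteq> y"
    using cherry_parent[OF bp ch] by blast
  define L where "L = {z \<in> X. f z}"
  define g where "g v = (v \<in> L \<or> v = w)" for v
  define E' where "E' = E - {{x, w}, {y, w}}"
  define D where "D = insert w (L - {x, y})"
  have finL: "finite L" and xyL: "x \<in> L" "y \<in> L"
    using B(6) xy fx fy unfolding L_def by auto
  have gf: "\<forall>z\<in>X. g z = f z"
    unfolding g_def L_def using wX by auto
  have "changes E g = changes E' g"
    unfolding changes_def E'_def g_def using xyL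
    by (intro arg_cong[where f = card]) (auto simp: doubleton_eq_iff)
  also have "\<dots> \<le> (\<Sum>d\<in>D. degree E' d)"
  proof (rule changes_le_sum_degree)
    show "finite E'" "finite D"
      using B(3) finL unfolding E'_def D_def by auto
    fix u v assume uv: "{u, v} \<in> E'" "g u \<noteq> g v"
    then obtain t where t: "t \<in> {u, v}" "t \<in> L \<or> t = w"
      unfolding g_def by blast
    have "t \<noteq> x" "t \<noteq> y"
      using t(1) uv(1) leaf_edge_unique[OF bp xy(1) w(2)] leaf_edge_unique[OF bp xy(2) w(3)]
      unfolding E'_def by auto
    then show "u \<in> D \<or> v \<in> D"
      using t unfolding D_def by auto
  qed
  also have "\<dots> = degree E' w + (\<Sum>d\<in>L - {x, y}. degree E' d)"
    unfolding D_def using finL wX unfolding L_def by (subst sum.insert) auto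
  also have "\<dots> \<le> 1 + card (L - {x, y})"
  proof (rule add_mono)
    have "{{x, w}, {y, w}} \<subseteq> {e \<in> E. w \<in> e}"
      using w by auto
    moreover have "{e \<in> E'. w \<in> e} = {e \<in> E. w \<in> e} - {{x, w}, {y, w}}"
      unfolding E'_def by blast
    ultimately have "degree E' w = degree E w - 2"
      unfolding degree_def using B(3) e12 by (simp add: card_Diff_subset)
    then show "degree E' w \<le> 1"
      using B(8)[OF w(1)] by simp
    have "(\<Sum>d\<in>L - {x, y}. degree E' d) \<le> (\<Sum>d\<in>L - {x, y}. degree E d)"
      using B(3) by (intro sum_mono degree_mono) (auto simp: E'_def)
    also have "\<dots> = card (L - {x, y})"
      by (rule sum_degree_leaves[OF bp]) (auto simp: L_def)
    finally show "(\<Sum>d\<in>L - {x, y}. degree E' d) \<le> card (L - {x, y})" .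
  qed
  also have "\<dots> < card L"
  proof -
    have "card {x, y} \<le> card L"
      using finL xyL by (intro card_mono) auto
    then show ?thesis
      using finL xyL xy(3) by (simp add: card_Diff_subset)
  qed
  finally show ?thesis
    using parsimony_le_changes[OF B(3) gf] unfolding L_def by linarith
qed

lemma walk_changed_edge:
  assumes "walk E V w" "g (hd w) \<noteq> g (last w)"
  shows "\<exists>e. e \<in> walk_edges w \<and> e \<in> {e \<in> E. \<exists>u v. e = {u, v} \<and> g u \<noteq> g v}"
proof -
  have "\<exists>a b. {a, b} \<in> walk_edges w \<and> g a \<noteq> g b"
    by (rule walk_edges_change[OF walkD(1)[OF assms(1)] assms(2)])
  then obtain a b where ab: "{a, b} \<in> walk_edges w" "g a \<noteq> g b"
    by blast
  moreover have "{a, b} \<in> E"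
    using ab(1) walkD(3)[OF assms(1)] by blast
  ultimately show ?thesis
    by (intro exI[of _ "{a, b}"] conjI CollectI exI[of _ a] exI[of _ b]) auto
qed

text \<open>Each walk of a pairing whose ends differ in colour contains its own changed edge.\<close>

lemma card_le_changes:
  assumes finE: "finite E" and p: "walk_pairing E V S W"
    and colours: "\<And>w. w \<in> W \<Longrightarrow> g (hd w) \<noteq> g (last w)"
  shows "card W \<le> changes E g"
proof -
  note P = walk_pairingD[OF p]
  let ?C = "{e \<in> E. \<exists>u v. e = {u, v} \<and> g u \<noteq> g v}"
  have "\<forall>w\<in>W. \<exists>e. e \<in> walk_edges w \<and> e \<in> ?C"
  proof
    fix w assume "w \<in> W"
    then show "\<exists>e. e \<in> walk_edges w \<and> e \<in> ?C"
      using walk_changed_edge[OF P(2) colours] by simp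
  qed
  then obtain pick where pick: "\<forall>w\<in>W. pick w \<in> walk_edges w \<and> pick w \<in> ?C"
    by (auto dest!: bchoice)
  have inj: "inj_on pick W"
  proof (rule inj_onI)
    fix v w assume vw: "v \<in> W" "w \<in> W" "pick v = pick w"
    show "v = w"
    proof (rule ccontr)
      assume "v \<noteq> w"
      then have "walk_edges v \<inter> walk_edges w = {}"
        using P(6) vw(1,2) by blast
      moreover have "pick v \<in> walk_edges v" "pick v \<in> walk_edges w"
        using pick vw by auto
      ultimately show False
        by blast
    qed
  qed
  have "pick ` W \<subseteq> ?C"
    using pick by blast
  then have "card W \<le> card ?C"
    using card_inj_on_le[OF inj] finE by simp
  then show ?thesis
    unfolding changes_def .
qed

lemma card_le_parsimony:
  assumes finE: "finite E" and p: "walk_pairing E V S W" and SX: "S \<subseteq> X"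
    and colours: "\<And>w. w \<in> W \<Longrightarrow> f (hd w) \<noteq> f (last w)"
  shows "card W \<le> parsimony X E f"
proof (rule le_parsimonyI[OF finE])
  fix g assume g: "\<forall>x\<in>X. g x = f x"
  have "hd w \<in> X" "last w \<in> X" if "w \<in> W" for w
    using that SX unfolding walk_pairingD(4)[OF p] by auto
  with g colours have "g (hd w) \<noteq> g (last w)" if "w \<in> W" for w
    using that by simp
  then show "card W \<le> changes E g"
    by (rule card_le_changes[OF finE p])
qed

subsection \<open>The subtrees hanging off a leaf-to-leaf path\<close>

locale leaf_path =
  fixes X V E and P :: "'v list"
  assumes bp: "binary_phylo_tree X V E" and path: "is_path E P"
    and hd_leaf: "hd P \<in> X" and last_leaf: "last P \<in> X" and hd_neq_last: "hd P \<noteq> last P"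
begin

abbreviation "n \<equiv> length P"

lemma path_nonempty: "P \<noteq> []"
  using path unfolding is_path_def by blast

lemma two_le_length: "2 \<le> n"
proof (rule ccontr)
  assume "\<not> 2 \<le> n"
  then have "n = 1"
    using path_nonempty by (cases P) (auto simp: Suc_le_eq)
  then have "hd P = last P"
    by (cases P) auto
  then show False
    using hd_neq_last by simp
qed

lemma hd_path: "hd P = P ! 0"
  by (simp add: hd_conv_nth path_nonempty)

lemma last_path: "last P = P ! (n - 1)"
  by (simp add: last_conv_nth path_nonempty)

lemma path_edge: "Suc i < n \<Longrightarrow> {P ! i, P ! Suc i} \<in> E"
  using path unfolding is_path_def by blast

lemma nth_eq_iff: "i < n \<Longrightarrow> l < n \<Longrightarrow> P ! i = P ! l \<longleftrightarrow> i = l"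
  using path unfolding is_path_def by (simp add: nth_eq_iff_index_eq)

lemma nth_in_V: "i < n \<Longrightarrow> P ! i \<in> V"
proof (cases "Suc i < n")
  case True
  then show ?thesis
    using binary_phylo_treeD(4)[OF bp, OF path_edge] by blast
next
  case False
  moreover assume "i < n"
  ultimately have "{P ! (i - 1), P ! Suc (i - 1)} \<in> E" "Suc (i - 1) = i"
    using path_edge[of "i - 1"] two_le_length by auto
  then show ?thesis
    using binary_phylo_treeD(4)[OF bp] by (metis insert_subset)
qed

lemma set_path_subset: "set P \<subseteq> V"
  using nth_in_V by (auto simp: in_set_conv_nth)

lemma interior_not_leaf:
  assumes "0 < i" "i < n - 1"
  shows "P ! i \<notin> X"
proof -
  have e: "{P ! (i - 1), P ! i} \<in> E" "{P ! i, P ! Suc i} \<in> E"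
    using path_edge[of "i - 1"] path_edge[of i] assms by simp_all
  have "P ! (i - 1) \<noteq> P ! Suc i" "P ! (i - 1) \<noteq> P ! i"
    using nth_eq_iff[of "i - 1" "Suc i"] nth_eq_iff[of "i - 1" i] assms by simp_all
  then have "{P ! (i - 1), P ! i} \<noteq> {P ! i, P ! Suc i}"
    by (auto simp: doubleton_eq_iff)
  then have "2 \<le> degree E (P ! i)"
    by (rule two_le_degree[OF binary_phylo_treeD(3)[OF bp] e]) simp_all
  then show ?thesis
    using binary_phylo_treeD(7)[OF bp] by auto
qed

lemma end_neighbour:
  assumes "i = 0 \<and> j = 1 \<or> i = n - 1 \<and> j = n - 2" and "{P ! i, z} \<in> E"
  shows "z = P ! j"
proof -
  have leaf: "P ! i \<in> X"
    using assms(1) hd_leaf last_leaf by (auto simp: hd_path last_path)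
  have "{P ! i, P ! j} \<in> E"
    using assms(1) path_edge[of 0] path_edge[of "n - 2"] two_le_length
    by (auto simp: insert_commute Suc_diff_Suc numeral_2_eq_2)
  then have "{P ! i, z} = {P ! i, P ! j}"
    using leaf_edge_unique[OF bp leaf] assms(2) by blast
  moreover have "P ! i \<noteq> P ! j"
    using assms(1) nth_eq_iff[of i j] two_le_length path_nonempty by auto
  ultimately show ?thesis
    by (auto simp: doubleton_eq_iff)
qed

lemma path_reach:
  assumes "i \<le> l" "l < n" "\<And>t. i \<le> t \<Longrightarrow> t \<le> l \<Longrightarrow> P ! t \<in> W"
  shows "(P ! i, P ! l) \<in> (adj_in E W)\<^sup>*"
  using assms
proof (induction l)
  case (Suc l)
  show ?case
  proof (cases "i = Suc l")
    case False
    then have "(P ! i, P ! l) \<in> (adj_in E W)\<^sup>*"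
      using Suc by simp
    moreover have "(P ! l, P ! Suc l) \<in> adj_in E W"
      using path_edge[of l] Suc.prems False unfolding adj_in_def by simp
    ultimately show ?thesis
      by (rule rtrancl_into_rtrancl)
  qed simp
qed simp

lemma reach_along_path:
  assumes "i < n" "l < n"
  shows "(P ! i, P ! l) \<in> (adj_in E (set P))\<^sup>*"
proof (cases "i \<le> l")
  case True
  with assms show ?thesis
    by (intro path_reach) auto
next
  case False
  with assms have "(P ! l, P ! i) \<in> (adj_in E (set P))\<^sup>*"
    by (intro path_reach) auto
  then show ?thesis
    by (rule rtrancl_adj_in_swap)
qed

text \<open>\<open>branch i\<close> is the vertex set of the paper's \<open>T\<^sub>A\<^sub>i\<close> together with its attachment vertex \<open>P ! i\<close>.\<close>

definition branch :: "nat \<Rightarrow> 'v set" where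
  "branch i = {v. (P ! i, v) \<in> (adj_in E ((V - set P) \<union> {P ! i}))\<^sup>*}"

lemma branch_cases: "v \<in> branch i \<Longrightarrow> v = P ! i \<or> v \<in> V - set P"
  unfolding branch_def using rtrancl_adj_in_target by fastforce

lemma nth_in_branch: "P ! i \<in> branch i"
  unfolding branch_def by simp

lemma branch_subset_V: "i < n \<Longrightarrow> branch i \<subseteq> V"
  using branch_cases nth_in_V by blast

lemma branch_reach: "v \<in> branch i \<Longrightarrow> (P ! i, v) \<in> (adj_in E (branch i))\<^sup>*"
  unfolding branch_def by (rule rtrancl_adj_in_within_reachable) simp

text \<open>Two branches meeting in a vertex would close a cycle through the path.\<close>

lemma branch_disjoint:
  assumes i: "i < n" and l: "l < n" and il: "i \<noteq> l"
  shows "branch i \<inter> branch l = {}"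
proof (rule ccontr)
  assume "branch i \<inter> branch l \<noteq> {}"
  then obtain v where vi: "v \<in> branch i" and vl: "v \<in> branch l"
    by blast
  let ?B = "V - set P"
  have PiPl: "P ! i \<noteq> P ! l"
    using nth_eq_iff[OF i l] il by simp
  have Pl: "P ! l \<in> set P"
    using l by simp
  have "v \<noteq> P ! l"
    using branch_cases[OF vi] PiPl Pl by auto
  moreover have "(P ! l, v) \<in> (adj_in E (?B \<union> {P ! l}))\<^sup>*"
    using vl unfolding branch_def by simp
  ultimately have "\<exists>w. {P ! l, w} \<in> E \<and> w \<in> ?B \<and> (w, v) \<in> (adj_in E ?B)\<^sup>*"
    using Pl by (intro rtrancl_adj_in_first_step) auto
  then obtain w where w: "{P ! l, w} \<in> E" "w \<in> ?B" "(w, v) \<in> (adj_in E ?B)\<^sup>*"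
    by blast
  let ?E' = "E - {{w, P ! l}}"
  have "adj_in E ?B \<subseteq> adj_in ?E' V"
    by (rule adj_in_avoiding[where z = "P ! l"]) (use Pl in auto)
  then have "(w, v) \<in> (adj_in ?E' V)\<^sup>*"
    by (rule subsetD[OF rtrancl_mono w(3)])
  moreover have "(v, P ! i) \<in> (adj_in ?E' V)\<^sup>*"
  proof -
    have "(P ! i, v) \<in> (adj_in E (?B \<union> {P ! i}))\<^sup>*"
      using vi unfolding branch_def by simp
    then have "(v, P ! i) \<in> (adj_in E (?B \<union> {P ! i}))\<^sup>*"
      by (rule rtrancl_adj_in_swap)
    moreover have "adj_in E (?B \<union> {P ! i}) \<subseteq> adj_in ?E' V"
      by (rule adj_in_avoiding[where z = "P ! l"]) (use nth_in_V[OF i] PiPl Pl in auto)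
    ultimately show ?thesis
      by (rule subsetD[OF rtrancl_mono, rotated])
  qed
  moreover have "(P ! i, P ! l) \<in> (adj_in ?E' V)\<^sup>*"
  proof -
    have "(P ! i, P ! l) \<in> (adj_in E (set P))\<^sup>*"
      by (rule reach_along_path[OF i l])
    moreover have "adj_in E (set P) \<subseteq> adj_in ?E' V"
      by (rule adj_in_avoiding[where z = w]) (use set_path_subset w(2) in auto)
    ultimately show ?thesis
      by (rule subsetD[OF rtrancl_mono, rotated])
  qed
  ultimately have "(w, P ! l) \<in> (adj_in ?E' V)\<^sup>*"
    by (meson rtrancl_trans)
  moreover have "{w, P ! l} \<in> E"
    using w(1) by (simp add: insert_commute)
  ultimately show False
    using tree_edge_is_bridge[OF binary_phylo_treeD(1)[OF bp]] by blast
qed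

lemma branch_first: "branch 0 = {P ! 0}"
proof -
  have only: "v = P ! 0" if v: "v \<in> branch 0" for v
  proof (rule ccontr)
    assume "v \<noteq> P ! 0"
    moreover have "(P ! 0, v) \<in> (adj_in E ((V - set P) \<union> {P ! 0}))\<^sup>*"
      using v unfolding branch_def by simp
    moreover have "P ! 0 \<notin> V - set P"
      using path_nonempty by simp
    ultimately have "\<exists>w. {P ! 0, w} \<in> E \<and> w \<in> V - set P \<and> (w, v) \<in> (adj_in E (V - set P))\<^sup>*"
      by (intro rtrancl_adj_in_first_step) auto
    then obtain w where "{P ! 0, w} \<in> E" "w \<in> V - set P"
      by blast
    then show False
      using end_neighbour[of 0 1 w] two_le_length by auto
  qed
  show ?thesis
  proof
    show "branch 0 \<subseteq> {P ! 0}"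
      using only by blast
    show "{P ! 0} \<subseteq> branch 0"
      using nth_in_branch by simp
  qed
qed

lemma Union_branches: "(\<Union>i<n. branch i) = V"
proof
  show "(\<Union>i<n. branch i) \<subseteq> V"
    using branch_subset_V by blast
  show "V \<subseteq> (\<Union>i<n. branch i)"
  proof
    fix v assume "v \<in> V"
    then have "(P ! 0, v) \<in> (adj_in E V)\<^sup>*"
      using binary_phylo_treeD(9)[OF bp] nth_in_V[of 0] path_nonempty
      unfolding connected_graph_def by auto
    then show "v \<in> (\<Union>i<n. branch i)"
    proof (induction rule: rtrancl_induct)
      case base
      then show ?case
        using nth_in_branch[of 0] path_nonempty by blast
    next
      case (step u v)
      then obtain i where i: "i < n" "u \<in> branch i"
        by blast
      show ?case
      proof (cases "v \<in> set P")
        case True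
        then obtain j where "j < n" "v = P ! j"
          by (auto simp: in_set_conv_nth)
        then show ?thesis
          using nth_in_branch[of j] by blast
      next
        case False
        have "u \<in> (V - set P) \<union> {P ! i}"
          using branch_cases[OF i(2)] by blast
        moreover have "v \<in> V - set P" "{u, v} \<in> E"
          using step(2) False unfolding adj_in_def by auto
        ultimately have "(u, v) \<in> adj_in E ((V - set P) \<union> {P ! i})"
          unfolding adj_in_def by simp
        then have "v \<in> branch i"
          using i(2) unfolding branch_def by (simp add: rtrancl_into_rtrancl)
        then show ?thesis
          using i(1) by blast
      qed
    qed
  qed
qed

lemma connected_branches:
  assumes "a \<le> b" "b < n"
  shows "connected_graph (\<Union>i\<in>{a..b}. branch i) E"
proof (rule connected_graphI_root)
  let ?U = "\<Union>i\<in>{a..b}. branch i"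
  fix v assume "v \<in> ?U"
  then obtain i where i: "i \<in> {a..b}" "v \<in> branch i"
    by blast
  have "P ! t \<in> ?U" if "a \<le> t" "t \<le> i" for t
    using that i(1) nth_in_branch[of t] by (intro UN_I[of t]) auto
  then have "(P ! a, P ! i) \<in> (adj_in E ?U)\<^sup>*"
    using i(1) assms(2) by (intro path_reach) auto
  moreover have "branch i \<subseteq> ?U"
    using i(1) by blast
  then have "(P ! i, v) \<in> (adj_in E ?U)\<^sup>*"
    by (rule rtrancl_adj_in_mono[OF _ branch_reach[OF i(2)]])
  ultimately show "(P ! a, v) \<in> (adj_in E ?U)\<^sup>*"
    by (rule rtrancl_trans)
qed

lemma leaves_branch:
  assumes "0 < i" "i < n - 1"
  shows "X \<inter> branch i = attached_leaves X V E (set P) (P ! i)"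
proof -
  have "z \<notin> set P" if "z \<in> X" "z \<in> branch i" for z
    using branch_cases[OF that(2)] that(1) interior_not_leaf[OF assms] by auto
  then show ?thesis
    unfolding attached_leaves_def branch_def by blast
qed


lemma Diff_prefix_branches:
  assumes "j < n"
  shows "V - (\<Union>i\<in>{0..j}. branch i) = (\<Union>i\<in>{Suc j..n - 1}. branch i)"
proof
  show "V - (\<Union>i\<in>{0..j}. branch i) \<subseteq> (\<Union>i\<in>{Suc j..n - 1}. branch i)"
  proof
    fix v assume v: "v \<in> V - (\<Union>i\<in>{0..j}. branch i)"
    then obtain i where "i < n" "v \<in> branch i"
      using Union_branches by blast
    moreover have "\<not> i \<le> j"
      using v \<open>v \<in> branch i\<close> by auto
    ultimately show "v \<in> (\<Union>i\<in>{Suc j..n - 1}. branch i)"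
      by auto
  qed
  show "(\<Union>i\<in>{Suc j..n - 1}. branch i) \<subseteq> V - (\<Union>i\<in>{0..j}. branch i)"
  proof
    fix v assume "v \<in> (\<Union>i\<in>{Suc j..n - 1}. branch i)"
    then obtain i where i: "Suc j \<le> i" "i \<le> n - 1" "v \<in> branch i"
      by auto
    have "i < n"
      using i(2) two_le_length by linarith
    have "v \<notin> branch l" if "l \<le> j" for l
      using branch_disjoint[of l i] \<open>i < n\<close> i(1,3) that assms by auto
    then show "v \<in> V - (\<Union>i\<in>{0..j}. branch i)"
      using i(3) branch_subset_V[OF \<open>i < n\<close>] by auto
  qed
qed

lemma card_leaves_prefix_branches:
  assumes "0 < j" "j < n"
  shows "card (X \<inter> (\<Union>i\<in>{0..j}. branch i))
    = 1 + card (X \<inter> branch j) + (\<Sum>i\<in>{1..<j}. card (X \<inter> branch i))"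
proof -
  have "card (X \<inter> (\<Union>i\<in>{0..j}. branch i)) = (\<Sum>i\<in>{0..j}. card (X \<inter> branch i))"
    unfolding Int_UN_distrib
  proof (rule card_UN_disjoint)
    show "\<forall>i\<in>{0..j}. finite (X \<inter> branch i)"
      using binary_phylo_treeD(6)[OF bp] by simp
    show "\<forall>i\<in>{0..j}. \<forall>l\<in>{0..j}. i \<noteq> l \<longrightarrow> X \<inter> branch i \<inter> (X \<inter> branch l) = {}"
    proof (intro ballI impI)
      fix i l assume "i \<in> {0..j}" "l \<in> {0..j}" "i \<noteq> l"
      then have "branch i \<inter> branch l = {}"
        using assms by (intro branch_disjoint) auto
      then show "X \<inter> branch i \<inter> (X \<inter> branch l) = {}"
        by blast
    qed
  qed simp
  also have "\<dots> = card (X \<inter> branch 0) + (card (X \<inter> branch j) + (\<Sum>i\<in>{1..<j}. card (X \<inter> branch i)))"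
  proof -
    have "{0..j} = insert 0 (insert j {1..<j})"
      using assms by auto
    then show ?thesis
      using assms by simp
  qed
  also have "card (X \<inter> branch 0) = 1"
    using hd_leaf unfolding branch_first hd_path by simp
  finally show ?thesis
    by simp
qed

text \<open>Cut the path just after the first interior vertex whose subtree carries an odd number of
  leaves: the part containing \<open>hd P\<close> then has \<open>1 + odd + even\<close> leaves.\<close>

lemma even_leaf_split:
  assumes b: "b \<in> set P - {hd P, last P}" and odd: "odd (card (attached_leaves X V E (set P) b))"
  obtains U where "U \<subseteq> V" "hd P \<in> U" "last P \<notin> U" "connected_graph U E"
    "connected_graph (V - U) E" "even (card (X \<inter> U))"
proof -
  let ?c = "\<lambda>i. card (X \<inter> branch i)"
  define Q where "Q i \<longleftrightarrow> 0 < i \<and> i < n - 1 \<and> odd (?c i)" for i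
  obtain i0 where i0: "i0 < n" "b = P ! i0"
    using b by (auto simp: in_set_conv_nth)
  have "i0 \<noteq> 0"
  proof
    assume "i0 = 0"
    with b show False
      unfolding i0(2) hd_path by simp
  qed
  moreover have "i0 \<noteq> n - 1"
  proof
    assume "i0 = n - 1"
    with b show False
      unfolding i0(2) last_path by simp
  qed
  ultimately have "Q i0"
    using i0 odd leaves_branch[of i0] unfolding Q_def by auto
  define j where "j = (LEAST i. Q i)"
  have "Q j"
    unfolding j_def using \<open>Q i0\<close> by (rule LeastI)
  then have j: "0 < j" "j < n - 1" "odd (?c j)"
    unfolding Q_def by auto
  then have jn: "j < n"
    by simp
  have "even (?c i)" if "0 < i" "i < j" for i
  proof -
    have "\<not> Q i"
      using not_less_Least[of i Q] that(2) unfolding j_def by blast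
    then show ?thesis
      using that j unfolding Q_def by auto
  qed
  then have "even (\<Sum>i\<in>{1..<j}. ?c i)"
    by (intro dvd_sum) auto
  define U where "U = (\<Union>i\<in>{0..j}. branch i)"
  have "U \<subseteq> V"
    unfolding U_def using j by (intro UN_least branch_subset_V) auto
  moreover have "hd P \<in> U"
    unfolding U_def hd_path using nth_in_branch[of 0] by auto
  moreover have "P ! (n - 1) \<in> V - U"
    unfolding U_def Diff_prefix_branches[OF jn] using j nth_in_branch[of "n - 1"]
    by (intro UN_I[of "n - 1"]) auto
  then have "last P \<notin> U"
    unfolding last_path by simp
  moreover have "connected_graph U E"
    unfolding U_def using j by (intro connected_branches) auto
  moreover have "connected_graph (V - U) E"
    unfolding U_def Diff_prefix_branches[OF jn] using j by (intro connected_branches) auto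
  moreover have "even (card (X \<inter> U))"
    unfolding U_def using card_leaves_prefix_branches[OF j(1) jn] j \<open>even (\<Sum>i\<in>{1..<j}. ?c i)\<close> by simp
  ultimately show ?thesis
    using that by blast
qed

end

text \<open>Pair the leaves of each side by edge-disjoint walks and colour the first vertex of every
  walk \<open>True\<close>.\<close>

lemma exists_extremal_character:
  assumes bp: "binary_phylo_tree X V E" and cX: "card X = 2 * k"
    and U: "U \<subseteq> V" "connected_graph U E" "connected_graph (V - U) E" "even (card (X \<inter> U))"
    and x: "x \<in> X \<inter> U" and y: "y \<in> X - U"
  obtains f where "f \<in> extensional X" "f x" "f y" "card {z \<in> X. f z} = k" "parsimony X E f = k"
proof -
  note B = binary_phylo_treeD[OF bp]
  have edges: "\<forall>e\<in>E. card e = 2"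
    using B(4) by blast
  have "even (card (X - U))"
    using card_Int_Diff[OF B(6), of U] cX U(4) by presburger
  obtain W1 where "walk_pairing E U (X \<inter> U) W1"
    using walk_pairing_exists[OF finite_subset[OF U(1) B(2)] U(2) edges _ U(4)] by blast
  then obtain W1' where p1: "walk_pairing E U (X \<inter> U) W1'" "x \<in> hd ` W1'"
    using x by (rule walk_pairing_orient)
  obtain W2 where "walk_pairing E (V - U) (X - U) W2"
    using walk_pairing_exists[OF _ U(3) edges _ \<open>even (card (X - U))\<close>] B(2,5) by blast
  then obtain W2' where p2: "walk_pairing E (V - U) (X - U) W2'" "y \<in> hd ` W2'"
    using y by (rule walk_pairing_orient)
  let ?W = "W1' \<union> W2'"
  have "walk_pairing E (U \<union> (V - U)) ((X \<inter> U) \<union> (X - U)) ?W"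
    using walk_pairing_Un[OF p1(1) p2(1)] by blast
  moreover have "U \<union> (V - U) = V" "(X \<inter> U) \<union> (X - U) = X"
    using U(1) by blast+
  ultimately have p: "walk_pairing E V X ?W"
    by simp
  note H = walk_pairing_heads[OF p]
  define f where "f = restrict (\<lambda>z. z \<in> hd ` ?W) X"
  have k: "card ?W = k"
    using walk_pairing_card[OF p] cX by simp
  have T: "{z \<in> X. f z} = hd ` ?W"
    using H(2) unfolding f_def by auto
  have F: "{z \<in> X. \<not> f z} = last ` ?W"
    using H(3) unfolding f_def by auto
  have "f \<in> extensional X" "f x" "f y"
    using x y p1(2) p2(2) unfolding f_def by auto
  moreover have "card {z \<in> X. f z} = k"
    unfolding T using card_image[OF H(1)] k by simp
  moreover have "parsimony X E f = k"
  proof (rule antisym)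
    show "parsimony X E f \<le> k"
      using parsimony_le_card_false_leaves[OF bp, of f] card_image_le[OF walk_pairingD(1)[OF p], of last]
      unfolding F k by simp
    have "f (hd w) \<noteq> f (last w)" if "w \<in> ?W" for w
      using that T F by blast
    then show "k \<le> parsimony X E f"
      using card_le_parsimony[OF B(3) p order_refl] k by simp
  qed
  ultimately show ?thesis
    using that by blast
qed

theorem corollary5:
  fixes X V1 V2 :: "'v set" and E1 E2 :: "'v set set" and k :: nat
    and x y :: 'v and P :: "'v list"
  assumes "k \<ge> 1"
    and "binary_phylo_tree X V1 E1" and "binary_phylo_tree X V2 E2"
    and "card X = 2 * k"
    and "A_set k X E1 = A_set k X E2"
    and "is_cherry X V1 E1 x y"
    and "is_path E2 P" and "hd P = x" and "last P = y"
  shows "\<forall>b \<in> set P - {x, y}. even (card (attached_leaves X V2 E2 (set P) b))"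
proof (intro ballI, rule ccontr)
  fix b assume b: "b \<in> set P - {x, y}" and odd: "odd (card (attached_leaves X V2 E2 (set P) b))"
  have xy: "x \<in> X" "y \<in> X" "x \<noteq> y"
    using assms(6) unfolding is_cherry_def by blast+
  interpret leaf_path X V2 E2 P
    using assms(3,7-9) xy by unfold_locales auto
  obtain U where U: "U \<subseteq> V2" "x \<in> U" "y \<notin> U" "connected_graph U E2"
    "connected_graph (V2 - U) E2" "even (card (X \<inter> U))"
    using even_leaf_split b odd assms(8,9) by metis
  obtain f where f: "f \<in> extensional X" "f x" "f y" "card {z \<in> X. f z} = k" "parsimony X E2 f = k"
    using exists_extremal_character[OF assms(3,4) U(1,4-6)] U(2,3) xy by blast
  then have "parsimony X E1 f = k"
    using assms(5) unfolding A_set_def by blast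
  moreover have "parsimony X E1 f < k"
    using parsimony_cherry_less[OF assms(2,6) f(2,3)] f(4) by simp
  ultimately show False
    by simp
qed

end
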